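(* If $c\in\mathbb{R}^m$ generates an extreme ray of $C_{\mathrm{SAGE}}(A)$, then the set $\{a_i: i\in[m],\ c_i\ne 0\}$ is either a singleton or a simplicial circuit.
   Context: Let $A\in\mathbb{R}^{n\times m}$ have distinct columns $a_1,\dots,a_m$. For $c\in\mathbb{R}^m$, $\mathrm{Sig}(A,c)$ denotes the function $x\mapsto\sum_{i=1}^m c_i\exp(a_i^\top x)$ on $\mathbb{R}^n$. $C_{\mathrm{NNS}}(A)=\{c\in\mathbb{R}^m:\mathrm{Sig}(A,c)(x)\ge 0\ \forall x\in\mathbb{R}^n\}$. For $k\in[m]$, the $k$-th AGE cone is $C_{\mathrm{AGE}}(A,k)=\{c\in C_{\mathrm{NNS}}(A): c_i\ge 0\ \forall i\ne k\}$, and the SAGE cone is the Minkowski sum $C_{\mathrm{SAGE}}(A)=\sum_{k=1}^m C_{\mathrm{AGE}}(A,k)$. A finite point set $\{x_1,\dots,x_\ell\}$ is a circuit if it is affinely dependent but every proper subset is affinely independent; a circuit with $\ell$ elements is simplicial if its convex hull has exactly $\ell-1$ extreme points. *)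

theory Defs
  imports "HOL-Analysis.Analysis"
begin

text \<open>The matrix A is given by its columns a :: 'm => real^'n, where the finite
type 'm plays the role of the index set [m].  Coefficient vectors are c :: real^'m.\<close>

definition Sig :: "('m::finite \<Rightarrow> real^'n) \<Rightarrow> real^'m \<Rightarrow> real^'n \<Rightarrow> real" where
  "Sig a c x = (\<Sum>i\<in>UNIV. c $ i * exp (a i \<bullet> x))"

definition C_NNS :: "('m::finite \<Rightarrow> real^'n) \<Rightarrow> (real^'m) set" where
  "C_NNS a = {c. \<forall>x. Sig a c x \<ge> 0}"

definition C_AGE :: "('m::finite \<Rightarrow> real^'n) \<Rightarrow> 'm \<Rightarrow> (real^'m) set" where
  "C_AGE a k = {c \<in> C_NNS a. \<forall>i. i \<noteq> k \<longrightarrow> c $ i \<ge> 0}"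

definition C_SAGE :: "('m::finite \<Rightarrow> real^'n) \<Rightarrow> (real^'m) set" where
  "C_SAGE a = {c. \<exists>f. (\<forall>k. f k \<in> C_AGE a k) \<and> c = (\<Sum>k\<in>UNIV. f k)}"

definition generates_extreme_ray :: "'v::real_vector set \<Rightarrow> 'v \<Rightarrow> bool" where
  "generates_extreme_ray C c \<longleftrightarrow> c \<noteq> 0 \<and> ((\<lambda>t. t *\<^sub>R c) ` {0..}) face_of C"

definition circuit :: "'v::euclidean_space set \<Rightarrow> bool" where
  "circuit S \<longleftrightarrow> finite S \<and> affine_dependent S \<and> (\<forall>T. T \<subset> S \<longrightarrow> \<not> affine_dependent T)"

definition simplicial_circuit :: "'v::euclidean_space set \<Rightarrow> bool" where
  "simplicial_circuit S \<longleftrightarrow> circuit S \<and>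
     card {p. p extreme_point_of (convex hull S)} = card S - 1"

end

theory Submission
  imports Defs
begin

text \<open>An extreme ray of the SAGE cone lies in a single AGE cone, say the \<open>k\<close>-th. If it is
  nonnegative it is a multiple of a unit vector. Otherwise \<open>c $ k < 0\<close>; let \<open>S\<close> be the other
  indices in the support. No direction \<open>y\<close> has \<open>(a i - a k) \<bullet> y \<le> 0\<close> on \<open>S\<close> with strict
  inequality somewhere, since dropping the terms that decay along \<open>y\<close> would split \<open>c\<close>. Hence
  \<open>\<Sum>i\<in>S. c $ i * exp ((a i - a k) \<bullet> x)\<close> attains its minimum at some \<open>x0\<close>, and the weights
  \<open>\<nu> i = c $ i * exp ((a i - a k) \<bullet> x0)\<close> are positive and balanced,
  \<open>\<Sum>i\<in>S. \<nu> i *\<^sub>R (a i - a k) = 0\<close>. Any other balanced weight vector is a multiple of \<open>\<nu>\<close>,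
  because perturbing \<open>\<nu>\<close> along it splits \<open>c\<close> into two AGE vectors. So \<open>a k\<close> is a positive convex
  combination of the affinely independent points \<open>a ` S\<close>, and the support is a simplicial circuit.\<close>

section \<open>The AGE and SAGE cones\<close>

lemma Sig_scaleR: "Sig a (t *\<^sub>R c) x = t * Sig a c x"
  by (simp add: Sig_def sum_distrib_left mult.assoc)

lemma cone_C_AGE: "cone (C_AGE a k)"
  by (auto simp: cone_def C_AGE_def C_NNS_def Sig_scaleR)

lemma nonneg_in_C_AGE: "(\<And>i. 0 \<le> c $ i) \<Longrightarrow> c \<in> C_AGE a k"
  by (auto simp: C_AGE_def C_NNS_def Sig_def intro!: sum_nonneg)

lemma sum_in_C_SAGE: "(\<And>k. f k \<in> C_AGE a k) \<Longrightarrow> (\<Sum>k\<in>UNIV. f k) \<in> C_SAGE a"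
  by (auto simp: C_SAGE_def)

lemma C_AGE_subset_C_SAGE: "C_AGE a k \<subseteq> C_SAGE a"
proof
  fix c assume c: "c \<in> C_AGE a k"
  have "(\<Sum>j\<in>UNIV. if j = k then c else 0) \<in> C_SAGE a"
    by (rule sum_in_C_SAGE) (use c nonneg_in_C_AGE[of 0] in auto)
  then show "c \<in> C_SAGE a" by simp
qed

lemma nonneg_in_C_SAGE: "(\<And>i. 0 \<le> c $ i) \<Longrightarrow> c \<in> C_SAGE a"
  using C_AGE_subset_C_SAGE nonneg_in_C_AGE by blast

lemma cone_C_SAGE: "cone (C_SAGE a)"
  unfolding cone_def
proof (intro ballI allI impI)
  fix c and t :: real assume "c \<in> C_SAGE a" "0 \<le> t"
  then obtain f where "\<forall>k. f k \<in> C_AGE a k" "c = (\<Sum>k\<in>UNIV. f k)" by (auto simp: C_SAGE_def)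
  then have "(\<Sum>k\<in>UNIV. t *\<^sub>R f k) \<in> C_SAGE a"
    using cone_C_AGE[unfolded cone_def] \<open>0 \<le> t\<close> by (intro sum_in_C_SAGE) blast
  then show "t *\<^sub>R c \<in> C_SAGE a" by (simp add: \<open>c = _\<close> scaleR_sum_right)
qed

definition ray_indecomposable :: "'v::real_vector set \<Rightarrow> 'v \<Rightarrow> bool" where
  "ray_indecomposable C c \<longleftrightarrow> (\<forall>x\<in>C. \<forall>y\<in>C. x + y = c \<longrightarrow> (\<exists>t\<ge>0. x = t *\<^sub>R c))"

lemma ray_indecomposableD:
  "ray_indecomposable C c \<Longrightarrow> x \<in> C \<Longrightarrow> y \<in> C \<Longrightarrow> x + y = c \<Longrightarrow> \<exists>t\<ge>0. x = t *\<^sub>R c"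
  by (auto simp: ray_indecomposable_def)

lemma face_of_ray_imp_ray_indecomposable:
  fixes c :: "'v::real_vector"
  assumes "cone C" and face: "((\<lambda>t. t *\<^sub>R c) ` {0..}) face_of C"
  shows "ray_indecomposable C c"
  unfolding ray_indecomposable_def
proof (intro ballI impI)
  fix x y assume xC: "x \<in> C" and yC: "y \<in> C" and xy: "x + y = c"
  show "\<exists>t\<ge>0. x = t *\<^sub>R c"
  proof (cases "x = y")
    case True
    then show ?thesis using xy by (intro exI[of _ "1/2"]) (auto simp: scaleR_2[symmetric])
  next
    case False
    have "c = midpoint (2 *\<^sub>R x) (2 *\<^sub>R y)"
      using xy by (simp add: midpoint_def scaleR_add_right[symmetric])
    then have "c \<in> open_segment (2 *\<^sub>R x) (2 *\<^sub>R y)" using False by simp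
    moreover have "2 *\<^sub>R x \<in> C" "2 *\<^sub>R y \<in> C" using \<open>cone C\<close> xC yC by (auto simp: cone_def)
    moreover have "c \<in> (\<lambda>t. t *\<^sub>R c) ` {0..}" by (rule image_eqI[of _ _ 1]) auto
    ultimately have "2 *\<^sub>R x \<in> (\<lambda>t. t *\<^sub>R c) ` {0..}"
      using face unfolding face_of_def by blast
    then obtain t where "0 \<le> t" "2 *\<^sub>R x = t *\<^sub>R c" by auto
    then show ?thesis by (intro exI[of _ "t/2"]) (auto simp: scaleR_scaleR[symmetric] dest: arg_cong[of _ _ "scaleR (1/2)"])
  qed
qed

lemma ray_indecomposable_SAGE_imp_AGE:
  assumes ind: "ray_indecomposable (C_SAGE a) c" and cC: "c \<in> C_SAGE a" and "c \<noteq> 0"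
  obtains k where "c \<in> C_AGE a k"
proof -
  obtain f where f: "\<And>k. f k \<in> C_AGE a k" and c_eq: "c = (\<Sum>k\<in>UNIV. f k)"
    using cC by (auto simp: C_SAGE_def)
  obtain k where "f k \<noteq> 0" using \<open>c \<noteq> 0\<close> c_eq by (metis sum.neutral)
  have "c - f k = (\<Sum>j\<in>UNIV. (f(k := 0)) j)"
    by (simp add: c_eq sum.remove[of UNIV k] sum.If_cases Compl_eq_Diff_UNIV)
  also have "\<dots> \<in> C_SAGE a"
    using f nonneg_in_C_AGE[of 0 a] by (intro sum_in_C_SAGE) auto
  finally obtain t where "0 \<le> t" and t: "f k = t *\<^sub>R c"
    using ray_indecomposableD[OF ind C_AGE_subset_C_SAGE[THEN subsetD, OF f]] by force
  then have "t \<noteq> 0" using \<open>f k \<noteq> 0\<close> by auto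
  then have "c = (1 / t) *\<^sub>R f k" by (simp add: t)
  moreover have "(1 / t) *\<^sub>R f k \<in> C_AGE a k"
    using mem_cone[OF cone_C_AGE f] \<open>0 \<le> t\<close> by simp
  ultimately show ?thesis using that by simp
qed

lemma ray_indecomposable_nonneg_imp_singleton_support:
  assumes ind: "ray_indecomposable (C_SAGE a) c" and nonneg: "\<And>i. 0 \<le> c $ i" and "c \<noteq> 0"
  obtains j where "{i. c $ i \<noteq> 0} = {j}"
proof -
  obtain j where j: "c $ j \<noteq> 0" using \<open>c \<noteq> 0\<close> by (metis vec_eq_iff zero_index)
  have "axis j (c $ j) \<in> C_SAGE a" "c - axis j (c $ j) \<in> C_SAGE a"
    using nonneg by (auto intro!: nonneg_in_C_SAGE simp: axis_def)
  then obtain t where t: "axis j (c $ j) = t *\<^sub>R c"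
    using ray_indecomposableD[OF ind] by force
  then have "t \<noteq> 0" using j by (metis axis_nth scale_eq_0_iff vector_scaleR_component)
  have "c $ i = 0" if "i \<noteq> j" for i
    using arg_cong[OF t, of "\<lambda>v. v $ i"] that \<open>t \<noteq> 0\<close> by (simp add: axis_def)
  then show ?thesis using that j by blast
qed

section \<open>AGE vectors from balanced weights\<close>

lemma Sig_factor_exp:
  fixes a :: "'m::finite \<Rightarrow> real^'n"
  assumes "k \<notin> S" and "\<And>i. i \<notin> S \<Longrightarrow> i \<noteq> k \<Longrightarrow> c $ i = 0"
  shows "Sig a c x = exp (a k \<bullet> x) * (c $ k + (\<Sum>i\<in>S. c $ i * exp ((a i - a k) \<bullet> x)))"
proof -
  have "Sig a c x = (\<Sum>i\<in>insert k S. c $ i * exp (a i \<bullet> x))"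
    unfolding Sig_def by (rule sum.mono_neutral_right) (auto simp: assms)
  also have "\<dots> = c $ k * exp (a k \<bullet> x) + (\<Sum>i\<in>S. exp (a k \<bullet> x) * (c $ i * exp ((a i - a k) \<bullet> x)))"
    using assms(1) by (simp add: inner_diff_left exp_diff)
  finally show ?thesis by (simp add: sum_distrib_left algebra_simps)
qed

text \<open>For weights \<open>\<nu> \<ge> 0\<close> balanced at \<open>a k\<close>, this is the AGE vector whose signomial,
  divided by \<open>exp (a k \<bullet> x)\<close>, attains its minimum 0 at \<open>x0\<close>.\<close>
definition AGE_witness ::
    "('m::finite \<Rightarrow> real^'n) \<Rightarrow> 'm \<Rightarrow> 'm set \<Rightarrow> ('m \<Rightarrow> real) \<Rightarrow> real^'n \<Rightarrow> real^'m" where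
  "AGE_witness a k S \<nu> x0 =
     (\<chi> i. if i \<in> S then \<nu> i * exp (- ((a i - a k) \<bullet> x0)) else if i = k then - sum \<nu> S else 0)"

lemma AGE_witness_add:
  "AGE_witness a k S (\<lambda>i. \<nu> i + \<mu> i) x0 = AGE_witness a k S \<nu> x0 + AGE_witness a k S \<mu> x0"
  by (simp add: AGE_witness_def vec_eq_iff sum.distrib distrib_right)

lemma AGE_witness_in_C_AGE:
  fixes a :: "'m::finite \<Rightarrow> real^'n"
  assumes kS: "k \<notin> S" and nonneg: "\<And>i. i \<in> S \<Longrightarrow> 0 \<le> \<nu> i"
    and balanced: "(\<Sum>i\<in>S. \<nu> i *\<^sub>R (a i - a k)) = 0"
  shows "AGE_witness a k S \<nu> x0 \<in> C_AGE a k"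
proof -
  let ?d = "AGE_witness a k S \<nu> x0"
  have "0 \<le> ?d $ k + (\<Sum>i\<in>S. ?d $ i * exp ((a i - a k) \<bullet> x))" for x
  proof -
    \<comment> \<open>\<open>exp u \<ge> 1 + u\<close>, and the linear terms cancel by balancedness\<close>
    have "(\<Sum>i\<in>S. \<nu> i + \<nu> i * ((a i - a k) \<bullet> (x - x0))) \<le> (\<Sum>i\<in>S. ?d $ i * exp ((a i - a k) \<bullet> x))"
    proof (rule sum_mono)
      fix i assume i: "i \<in> S"
      have "\<nu> i * (1 + (a i - a k) \<bullet> (x - x0)) \<le> \<nu> i * exp ((a i - a k) \<bullet> (x - x0))"
        using nonneg[OF i] by (intro mult_left_mono) auto
      also have "\<dots> = ?d $ i * exp ((a i - a k) \<bullet> x)"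
        using i by (simp add: AGE_witness_def inner_diff_right exp_diff exp_minus field_simps)
      finally show "\<nu> i + \<nu> i * ((a i - a k) \<bullet> (x - x0)) \<le> ?d $ i * exp ((a i - a k) \<bullet> x)"
        by (simp add: algebra_simps)
    qed
    moreover have "(\<Sum>i\<in>S. \<nu> i * ((a i - a k) \<bullet> (x - x0))) = (\<Sum>i\<in>S. \<nu> i *\<^sub>R (a i - a k)) \<bullet> (x - x0)"
      by (simp add: inner_sum_left)
    ultimately show ?thesis using kS balanced by (simp add: AGE_witness_def sum.distrib)
  qed
  moreover have "Sig a ?d x = exp (a k \<bullet> x) * (?d $ k + (\<Sum>i\<in>S. ?d $ i * exp ((a i - a k) \<bullet> x)))" for x
    by (rule Sig_factor_exp) (use kS in \<open>auto simp: AGE_witness_def\<close>)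
  ultimately show ?thesis using nonneg by (simp add: C_AGE_def C_NNS_def AGE_witness_def)
qed

section \<open>Minimising exponential sums\<close>

lemma homogeneous_lower_bound_on_subspace:
  fixes h :: "'v::euclidean_space \<Rightarrow> real"
  assumes V: "subspace V" and cont: "continuous_on UNIV h"
    and homogeneous: "\<And>t x. 0 \<le> t \<Longrightarrow> h (t *\<^sub>R x) = t * h x"
    and pos: "\<And>x. x \<in> V \<Longrightarrow> x \<noteq> 0 \<Longrightarrow> 0 < h x"
  obtains \<delta> where "0 < \<delta>" "\<And>x. x \<in> V \<Longrightarrow> \<delta> * norm x \<le> h x"
proof -
  obtain \<delta> where \<delta>: "0 < \<delta>" "\<And>u. u \<in> sphere 0 1 \<inter> V \<Longrightarrow> \<delta> \<le> h u"
  proof (cases "sphere 0 1 \<inter> V = {}")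
    case True
    then show ?thesis using that[of 1] by auto
  next
    case False
    have "compact (sphere 0 1 \<inter> V)" using V by (intro compact_Int_closed closed_subspace) auto
    then obtain u0 where u0: "u0 \<in> sphere 0 1 \<inter> V" "\<And>u. u \<in> sphere 0 1 \<inter> V \<Longrightarrow> h u0 \<le> h u"
      using continuous_attains_inf[of "sphere 0 1 \<inter> V" h] False continuous_on_subset[OF cont] by blast
    then have "0 < h u0" using pos by force
    then show ?thesis using that u0 by blast
  qed
  have "\<delta> * norm x \<le> h x" if "x \<in> V" for x
  proof (cases "x = 0")
    case True
    then show ?thesis using homogeneous[of 0 0] by simp
  next
    case False
    then have "(1 / norm x) *\<^sub>R x \<in> sphere 0 1 \<inter> V" using that V by (auto intro: subspace_mul)
    then have "\<delta> \<le> h ((1 / norm x) *\<^sub>R x)" by (rule \<delta>(2))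
    then show ?thesis using False by (simp add: homogeneous field_simps)
  qed
  then show ?thesis using that \<delta>(1) by blast
qed

lemma exp_sum_linear_lower_bound:
  fixes b :: "'i \<Rightarrow> 'v::euclidean_space"
  assumes fin: "finite S" and wpos: "\<And>i. i \<in> S \<Longrightarrow> 0 < w i"
    and no_recession: "\<And>y. \<forall>i\<in>S. b i \<bullet> y \<le> 0 \<Longrightarrow> \<forall>i\<in>S. b i \<bullet> y = 0"
  shows "\<exists>\<epsilon>>0. \<forall>x\<in>span (b ` S). \<epsilon> * norm x \<le> (\<Sum>i\<in>S. w i * exp (b i \<bullet> x))"
proof (cases "S = {}")
  case True
  then show ?thesis by (intro exI[of _ 1]) simp
next
  case False
  define h where "h x = (\<Sum>i\<in>S. max 0 (b i \<bullet> x))" for x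
  define wmin where "wmin = Min (w ` S)"
  have wmin: "0 < wmin" "\<And>i. i \<in> S \<Longrightarrow> wmin \<le> w i"
    using fin False wpos by (auto simp: wmin_def)
  have h_pos: "0 < h x" if "x \<in> span (b ` S)" "x \<noteq> 0" for x
  proof (rule ccontr)
    assume "\<not> 0 < h x"
    then have "(\<Sum>i\<in>S. max 0 (b i \<bullet> x)) = 0" unfolding h_def by (simp add: antisym sum_nonneg)
    then have "\<forall>i\<in>S. max 0 (b i \<bullet> x) = 0" using fin by (subst (asm) sum_nonneg_eq_0_iff) auto
    then have "\<forall>i\<in>S. b i \<bullet> x = 0" using no_recession by (metis max.cobounded2)
    then have "orthogonal x x"
      using orthogonal_to_span[of x "b ` S" x] that(1) by (force simp: orthogonal_def inner_commute)
    then show False using \<open>x \<noteq> 0\<close> by (simp add: orthogonal_def)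
  qed
  obtain \<delta> where \<delta>: "0 < \<delta>" "\<And>x. x \<in> span (b ` S) \<Longrightarrow> \<delta> * norm x \<le> h x"
  proof (rule homogeneous_lower_bound_on_subspace[of "span (b ` S)" h])
    show "continuous_on UNIV h" unfolding h_def by (intro continuous_intros)
    show "h (t *\<^sub>R x) = t * h x" if "0 \<le> t" for t x
      using that by (simp add: h_def sum_distrib_left max_mult_distrib_left)
  qed (use h_pos in auto)
  have h_le: "wmin * h x \<le> (\<Sum>i\<in>S. w i * exp (b i \<bullet> x))" for x
    unfolding h_def sum_distrib_left
  proof (rule sum_mono)
    fix i assume "i \<in> S"
    have "b i \<bullet> x \<le> exp (b i \<bullet> x)" using exp_ge_add_one_self[of "b i \<bullet> x"] by linarith
    then have "max 0 (b i \<bullet> x) \<le> exp (b i \<bullet> x)" by (simp add: less_imp_le)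
    then show "wmin * max 0 (b i \<bullet> x) \<le> w i * exp (b i \<bullet> x)"
      using wmin wpos[of i] \<open>i \<in> S\<close> by (intro mult_mono) auto
  qed
  have "wmin * \<delta> * norm x \<le> (\<Sum>i\<in>S. w i * exp (b i \<bullet> x))" if "x \<in> span (b ` S)" for x
  proof -
    have "wmin * (\<delta> * norm x) \<le> wmin * h x"
      using \<delta>(2)[OF that] wmin(1) by (intro mult_left_mono) auto
    then show ?thesis using h_le[of x] by (simp add: mult.assoc)
  qed
  then show ?thesis using wmin(1) \<delta>(1) by (intro exI[of _ "wmin * \<delta>"]) simp
qed

lemma exp_sum_attains_min:
  fixes b :: "'i \<Rightarrow> 'v::euclidean_space"
  assumes fin: "finite S" and wpos: "\<And>i. i \<in> S \<Longrightarrow> 0 < w i"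
    and no_recession: "\<And>y. \<forall>i\<in>S. b i \<bullet> y \<le> 0 \<Longrightarrow> \<forall>i\<in>S. b i \<bullet> y = 0"
  shows "\<exists>x0. \<forall>x. (\<Sum>i\<in>S. w i * exp (b i \<bullet> x0)) \<le> (\<Sum>i\<in>S. w i * exp (b i \<bullet> x))"
proof -
  define V where "V = span (b ` S)"
  define g where "g x = (\<Sum>i\<in>S. w i * exp (b i \<bullet> x))" for x
  have "\<exists>\<epsilon>>0. \<forall>x\<in>V. \<epsilon> * norm x \<le> g x"
    unfolding V_def g_def by (rule exp_sum_linear_lower_bound) (use fin wpos no_recession in auto)
  then obtain \<epsilon> where "0 < \<epsilon>" and coercive: "\<And>x. x \<in> V \<Longrightarrow> \<epsilon> * norm x \<le> g x"
    by blast
  \<comment> \<open>outside the ball of radius \<open>R\<close>, \<open>g\<close> exceeds \<open>g 0\<close> on \<open>V\<close>\<close>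
  define R where "R = g 0 / \<epsilon>"
  have "0 \<le> g 0" unfolding g_def using wpos by (intro sum_nonneg) (simp add: less_imp_le)
  then have "0 \<in> V \<inter> cball 0 R" using \<open>0 < \<epsilon>\<close> by (simp add: R_def V_def span_zero)
  moreover have "compact (V \<inter> cball 0 R)" unfolding V_def by (intro closed_Int_compact) auto
  moreover have "continuous_on (V \<inter> cball 0 R) g" unfolding g_def by (intro continuous_intros)
  ultimately obtain x0 where x0: "x0 \<in> V \<inter> cball 0 R" "\<And>y. y \<in> V \<inter> cball 0 R \<Longrightarrow> g x0 \<le> g y"
    using continuous_attains_inf[of "V \<inter> cball 0 R" g] by blast
  have "g x0 \<le> g x" for x
  proof -
    \<comment> \<open>\<open>g\<close> only depends on the component of \<open>x\<close> in \<open>V\<close>\<close>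
    obtain p z where p: "p \<in> V" and z: "\<And>v. v \<in> V \<Longrightarrow> orthogonal z v" and x: "x = p + z"
      using orthogonal_subspace_decomp_exists[of "b ` S" x] V_def by metis
    have "b i \<bullet> z = 0" if "i \<in> S" for i
      using z[of "b i"] that by (auto simp: V_def span_base orthogonal_def inner_commute)
    then have gx: "g x = g p" unfolding g_def x by (auto simp: inner_add_right intro!: sum.cong)
    show ?thesis
    proof (cases "norm p \<le> R")
      case True
      then show ?thesis using x0 p gx by auto
    next
      case False
      have "g x0 \<le> g 0" using x0 \<open>0 \<in> V \<inter> cball 0 R\<close> by blast
      also have "\<dots> = \<epsilon> * R" using \<open>0 < \<epsilon>\<close> by (simp add: R_def)
      also have "\<dots> \<le> \<epsilon> * norm p" using False \<open>0 < \<epsilon>\<close> by simp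
      also have "\<dots> \<le> g p" by (rule coercive[OF p])
      finally show ?thesis using gx by simp
    qed
  qed
  then show ?thesis unfolding g_def by blast
qed

lemma exp_sum_min_stationary:
  fixes b :: "'i \<Rightarrow> 'v::real_inner"
  assumes min: "\<And>x. (\<Sum>i\<in>S. w i * exp (b i \<bullet> x0)) \<le> (\<Sum>i\<in>S. w i * exp (b i \<bullet> x))"
  shows "(\<Sum>i\<in>S. (w i * exp (b i \<bullet> x0)) *\<^sub>R b i) = 0"
proof -
  define v where "v = (\<Sum>i\<in>S. (w i * exp (b i \<bullet> x0)) *\<^sub>R b i)"
  define f where "f t = (\<Sum>i\<in>S. w i * exp (b i \<bullet> (x0 + t *\<^sub>R v)))" for t
  \<comment> \<open>the derivative of \<open>f\<close> at 0 is \<open>v \<bullet> v\<close>\<close>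
  have "(f has_real_derivative (\<Sum>i\<in>S. w i * (exp (b i \<bullet> x0) * (b i \<bullet> v)))) (at 0)"
    unfolding f_def inner_add_right inner_scaleR_right
    by (auto intro!: derivative_eq_intros simp: mult_ac)
  moreover have "\<forall>y. \<bar>0 - y\<bar> < 1 \<longrightarrow> f 0 \<le> f y"
    using min by (simp add: f_def)
  ultimately have "(\<Sum>i\<in>S. w i * (exp (b i \<bullet> x0) * (b i \<bullet> v))) = 0"
    by (rule DERIV_local_min[OF _ zero_less_one])
  moreover have "(\<Sum>i\<in>S. w i * (exp (b i \<bullet> x0) * (b i \<bullet> v))) = v \<bullet> v"
    unfolding v_def inner_sum_left by (simp add: mult.assoc)
  ultimately show ?thesis by (simp add: v_def)
qed

section \<open>Simplicial circuits from a one-dimensional kernel\<close>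

lemma mem_convex_hull_of_balanced:
  fixes a :: "'i \<Rightarrow> 'v::real_vector"
  assumes fin: "finite S" and "S \<noteq> {}" and pos: "\<And>i. i \<in> S \<Longrightarrow> 0 < \<nu> i"
    and balanced: "(\<Sum>i\<in>S. \<nu> i *\<^sub>R (a i - a k)) = 0"
  shows "a k \<in> convex hull (a ` S)"
proof -
  define m where "m = sum \<nu> S"
  have "0 < m" unfolding m_def using assms by (intro sum_pos) auto
  have "(\<Sum>i\<in>S. (\<nu> i / m) *\<^sub>R a i) \<in> convex hull (a ` S)"
    using fin \<open>0 < m\<close> pos
    by (intro convex_sum) (auto simp: m_def sum_divide_distrib[symmetric] hull_inc less_imp_le)
  moreover have "(\<Sum>i\<in>S. (\<nu> i / m) *\<^sub>R a i) = a k"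
  proof -
    have "(\<Sum>i\<in>S. \<nu> i *\<^sub>R a i) = m *\<^sub>R a k"
      using balanced by (simp add: scaleR_diff_right sum_subtractf scaleR_sum_left m_def)
    moreover have "(\<Sum>i\<in>S. (\<nu> i / m) *\<^sub>R a i) = (1 / m) *\<^sub>R (\<Sum>i\<in>S. \<nu> i *\<^sub>R a i)"
      by (simp add: scaleR_sum_right)
    ultimately show ?thesis using \<open>0 < m\<close> by simp
  qed
  ultimately show ?thesis by simp
qed

lemma affine_dependence_of_one_dim_kernel:
  fixes a :: "'i \<Rightarrow> 'v::real_vector"
  assumes inj: "inj_on a (insert k S)" and fin: "finite S" and kS: "k \<notin> S"
    and kernel: "\<And>l. (\<Sum>i\<in>S. l i *\<^sub>R (a i - a k)) = 0 \<Longrightarrow> \<exists>r. \<forall>i\<in>S. l i = r * \<nu> i"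
    and u: "(\<Sum>v\<in>a ` insert k S. u v) = 0" "(\<Sum>v\<in>a ` insert k S. u v *\<^sub>R v) = 0"
  obtains r where "\<And>i. i \<in> S \<Longrightarrow> u (a i) = r * \<nu> i" "u (a k) = - r * sum \<nu> S"
proof -
  have sum_u: "u (a k) + (\<Sum>i\<in>S. u (a i)) = 0"
    using u(1) fin kS by (subst (asm) sum.reindex[OF inj]) simp
  have "u (a k) *\<^sub>R a k + (\<Sum>i\<in>S. u (a i) *\<^sub>R a i) = 0"
    using u(2) fin kS by (subst (asm) sum.reindex[OF inj]) simp
  then have "(\<Sum>i\<in>S. u (a i) *\<^sub>R (a i - a k)) = 0"
    using sum_u by (simp add: scaleR_diff_right sum_subtractf flip: scaleR_sum_left eq_neg_iff_add_eq_0)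
  then obtain r where r: "\<And>i. i \<in> S \<Longrightarrow> u (a i) = r * \<nu> i" using kernel by meson
  then have "(\<Sum>i\<in>S. u (a i)) = r * sum \<nu> S" by (simp add: sum_distrib_left)
  then have "u (a k) = - r * sum \<nu> S" using sum_u by linarith
  then show ?thesis using that r by blast
qed

lemma circuit_of_one_dim_kernel:
  fixes a :: "'i \<Rightarrow> 'v::euclidean_space"
  assumes inj: "inj_on a (insert k S)" and fin: "finite S" and kS: "k \<notin> S" and "S \<noteq> {}"
    and pos: "\<And>i. i \<in> S \<Longrightarrow> 0 < \<nu> i" and balanced: "(\<Sum>i\<in>S. \<nu> i *\<^sub>R (a i - a k)) = 0"
    and kernel: "\<And>l. (\<Sum>i\<in>S. l i *\<^sub>R (a i - a k)) = 0 \<Longrightarrow> \<exists>r. \<forall>i\<in>S. l i = r * \<nu> i"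
  shows "circuit (a ` insert k S)"
proof -
  let ?N = "a ` insert k S"
  have "a k \<notin> a ` S" using inj kS by auto
  then have "a k \<in> affine hull (?N - {a k})"
    using mem_convex_hull_of_balanced[OF fin \<open>S \<noteq> {}\<close> pos balanced] convex_hull_subset_affine_hull
    by (auto simp: insert_Diff_if)
  then have "affine_dependent ?N" unfolding affine_dependent_def by blast
  moreover have "\<not> affine_dependent T" if psub: "T \<subset> ?N" for T
  proof
    assume "affine_dependent T"
    moreover have "finite T" using psub fin finite_subset by blast
    ultimately obtain U v0 where U: "sum U T = 0" "(\<Sum>v\<in>T. U v *\<^sub>R v) = 0" and "v0 \<in> T" "U v0 \<noteq> 0"
      by (auto simp: affine_dependent_explicit_finite)
    \<comment> \<open>extend the dependence by zero to \<open>?N\<close>; the kernel condition makes it vanish nowhere or everywhere\<close>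
    define u where "u v = (if v \<in> T then U v else 0)" for v
    have "T \<subseteq> ?N" using psub by blast
    have "(\<Sum>v\<in>?N. u v) = sum U T" "(\<Sum>v\<in>?N. u v *\<^sub>R v) = (\<Sum>v\<in>T. U v *\<^sub>R v)"
      using \<open>T \<subseteq> ?N\<close> fin by (auto simp: u_def intro!: sum.mono_neutral_cong_right)
    then have "(\<Sum>v\<in>?N. u v) = 0" "(\<Sum>v\<in>?N. u v *\<^sub>R v) = 0" using U by simp_all
    then obtain r where r: "\<And>i. i \<in> S \<Longrightarrow> u (a i) = r * \<nu> i" "u (a k) = - r * sum \<nu> S"
      using affine_dependence_of_one_dim_kernel[OF inj fin kS kernel] by blast
    have "0 < sum \<nu> S" using assms by (intro sum_pos) auto
    have u_image: "u v \<in> {r * \<nu> i |i. i \<in> S} \<union> {- r * sum \<nu> S}" if "v \<in> ?N" for v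
      using that r by auto
    have "r \<noteq> 0"
    proof
      assume "r = 0"
      then have "u v0 = 0" using u_image[of v0] \<open>T \<subseteq> ?N\<close> \<open>v0 \<in> T\<close> by auto
      then show False using \<open>v0 \<in> T\<close> \<open>U v0 \<noteq> 0\<close> by (simp add: u_def)
    qed
    obtain w where "w \<in> ?N" "w \<notin> T" using psubset_imp_ex_mem[OF psub] by blast
    then have "u w = 0" by (simp add: u_def)
    moreover have "u w \<noteq> 0"
    proof -
      from u_image[OF \<open>w \<in> ?N\<close>] consider i where "i \<in> S" "u w = r * \<nu> i" | "u w = - r * sum \<nu> S"
        by blast
      then show ?thesis using \<open>r \<noteq> 0\<close> pos \<open>0 < sum \<nu> S\<close> by cases (force, simp)
    qed
    ultimately show False by simp
  qed
  ultimately show ?thesis using fin by (simp add: circuit_def)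
qed

lemma simplicial_circuit_of_one_dim_kernel:
  fixes a :: "'i \<Rightarrow> 'v::euclidean_space"
  assumes inj: "inj_on a (insert k S)" and fin: "finite S" and kS: "k \<notin> S" and "S \<noteq> {}"
    and pos: "\<And>i. i \<in> S \<Longrightarrow> 0 < \<nu> i" and balanced: "(\<Sum>i\<in>S. \<nu> i *\<^sub>R (a i - a k)) = 0"
    and kernel: "\<And>l. (\<Sum>i\<in>S. l i *\<^sub>R (a i - a k)) = 0 \<Longrightarrow> \<exists>r. \<forall>i\<in>S. l i = r * \<nu> i"
  shows "simplicial_circuit (a ` insert k S)"
proof -
  have circuit: "circuit (a ` insert k S)"
    using circuit_of_one_dim_kernel[OF assms] .
  have "a k \<notin> a ` S" using inj kS by auto
  then have "\<not> affine_dependent (a ` S)" using circuit by (auto simp: circuit_def)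
  moreover have "convex hull (a ` insert k S) = convex hull (a ` S)"
    using hull_redundant[OF mem_convex_hull_of_balanced[OF fin \<open>S \<noteq> {}\<close> pos balanced]] by simp
  ultimately have "{p. p extreme_point_of convex hull (a ` insert k S)} = a ` S"
    using extreme_point_of_convex_hull_affine_independent by auto
  moreover have "card (a ` S) = card S" "card (a ` insert k S) = card S + 1"
    using inj fin kS by (simp_all add: card_image inj_on_subset[OF inj])
  ultimately show ?thesis using circuit by (simp add: simplicial_circuit_def)
qed

section \<open>Extreme rays with a negative coefficient\<close>

lemma nonneg_limit_of_decaying_exps:
  fixes \<alpha> \<beta> :: "'i \<Rightarrow> real"
  assumes "finite T" and decay: "\<And>i. i \<in> T \<Longrightarrow> \<beta> i < 0"
    and nonneg: "\<And>t. 0 \<le> L + (\<Sum>i\<in>T. \<alpha> i * exp (t * \<beta> i))"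
  shows "0 \<le> L"
proof -
  have "((\<lambda>t. exp (t * \<beta> i)) \<longlongrightarrow> 0) at_top" if "i \<in> T" for i
  proof -
    have "filterlim (\<lambda>t. t * \<beta> i) at_bot at_top"
      using filterlim_tendsto_neg_mult_at_bot[OF tendsto_const decay[OF that] filterlim_ident]
      by (simp add: mult.commute)
    then show ?thesis by (rule filterlim_compose[OF exp_at_bot])
  qed
  then have "((\<lambda>t. L + (\<Sum>i\<in>T. \<alpha> i * exp (t * \<beta> i))) \<longlongrightarrow> L + (\<Sum>i\<in>T. \<alpha> i * 0)) at_top"
    by (intro tendsto_intros) auto
  then have "((\<lambda>t. L + (\<Sum>i\<in>T. \<alpha> i * exp (t * \<beta> i))) \<longlongrightarrow> L) at_top"
    by simp
  then show ?thesis
    by (rule tendsto_lowerbound) (simp_all add: nonneg always_eventually)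
qed

lemma small_multiple_dominated:
  fixes l \<nu> :: "'i \<Rightarrow> real"
  assumes "finite S" and pos: "\<And>i. i \<in> S \<Longrightarrow> 0 < \<nu> i"
  obtains \<epsilon> where "0 < \<epsilon>" "\<And>i. i \<in> S \<Longrightarrow> \<epsilon> * \<bar>l i\<bar> < \<nu> i"
proof -
  have "\<forall>\<^sub>F \<epsilon> in at_right 0. \<forall>i\<in>S. \<epsilon> * \<bar>l i\<bar> < \<nu> i"
  proof (rule eventually_ball_finite[OF \<open>finite S\<close>], intro ballI)
    fix i assume "i \<in> S"
    have "((\<lambda>\<epsilon>. \<epsilon> * \<bar>l i\<bar>) \<longlongrightarrow> 0 * \<bar>l i\<bar>) (at_right 0)" by (intro tendsto_intros)
    then show "\<forall>\<^sub>F \<epsilon> in at_right 0. \<epsilon> * \<bar>l i\<bar> < \<nu> i"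
      using pos[OF \<open>i \<in> S\<close>] by (simp add: order_tendstoD)
  qed
  moreover have "\<forall>\<^sub>F \<epsilon> in at_right (0::real). 0 < \<epsilon>" by (simp add: eventually_at_right_less)
  ultimately have "\<forall>\<^sub>F \<epsilon> in at_right (0::real). 0 < \<epsilon> \<and> (\<forall>i\<in>S. \<epsilon> * \<bar>l i\<bar> < \<nu> i)"
    by eventually_elim auto
  then obtain \<epsilon> where "0 < \<epsilon> \<and> (\<forall>i\<in>S. \<epsilon> * \<bar>l i\<bar> < \<nu> i)"
    using eventually_happens[of _ "at_right (0::real)"] by auto
  then show ?thesis using that by blast
qed

locale negative_extreme_AGE =
  fixes a :: "'m::finite \<Rightarrow> real^'n" and c :: "real^'m" and k :: 'm
  assumes indecomposable: "ray_indecomposable (C_SAGE a) c"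
    and c_AGE: "c \<in> C_AGE a k"
    and c_k_neg: "c $ k < 0"
begin

definition S :: "'m set" where
  "S = {i. i \<noteq> k \<and> c $ i \<noteq> 0}"

lemma k_notin_S: "k \<notin> S"
  by (simp add: S_def)

lemma support_eq: "{i. c $ i \<noteq> 0} = insert k S"
  using c_k_neg by (auto simp: S_def)

lemma c_pos: "i \<in> S \<Longrightarrow> 0 < c $ i"
  using c_AGE by (auto simp: C_AGE_def S_def order_le_less)

lemma shifted_Sig_nonneg: "0 \<le> c $ k + (\<Sum>i\<in>S. c $ i * exp ((a i - a k) \<bullet> x))"
proof -
  have "Sig a c x = exp (a k \<bullet> x) * (c $ k + (\<Sum>i\<in>S. c $ i * exp ((a i - a k) \<bullet> x)))"
    by (rule Sig_factor_exp) (auto simp: S_def)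
  moreover have "0 \<le> Sig a c x" using c_AGE by (simp add: C_AGE_def C_NNS_def)
  ultimately show ?thesis by (simp add: zero_le_mult_iff)
qed

lemma S_nonempty: "S \<noteq> {}"
  using shifted_Sig_nonneg[of 0] c_k_neg by auto

lemma truncation_in_C_AGE:
  assumes y: "\<forall>i\<in>S. (a i - a k) \<bullet> y \<le> 0"
  shows "(\<chi> i. if i \<in> S \<and> (a i - a k) \<bullet> y \<noteq> 0 then 0 else c $ i) \<in> C_AGE a k"
    (is "?cF \<in> _")
proof -
  define F where "F = {i\<in>S. (a i - a k) \<bullet> y = 0}"
  have "F \<subseteq> S" by (auto simp: F_def)
  \<comment> \<open>along \<open>x + t y\<close> the terms outside \<open>F\<close> decay, so dropping them keeps the signomial nonnegative\<close>
  have "0 \<le> c $ k + (\<Sum>i\<in>F. c $ i * exp ((a i - a k) \<bullet> x))" for x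
  proof (rule nonneg_limit_of_decaying_exps[where T = "S - F"])
    show "(a i - a k) \<bullet> y < 0" if "i \<in> S - F" for i
      using that y by (force simp: F_def)
    show "0 \<le> c $ k + (\<Sum>i\<in>F. c $ i * exp ((a i - a k) \<bullet> x)) +
              (\<Sum>i\<in>S - F. (c $ i * exp ((a i - a k) \<bullet> x)) * exp (t * ((a i - a k) \<bullet> y)))" for t
    proof -
      have "(\<Sum>i\<in>S. c $ i * exp ((a i - a k) \<bullet> (x + t *\<^sub>R y))) =
          (\<Sum>i\<in>F. c $ i * exp ((a i - a k) \<bullet> (x + t *\<^sub>R y))) + (\<Sum>i\<in>S - F. c $ i * exp ((a i - a k) \<bullet> (x + t *\<^sub>R y)))"
        using \<open>F \<subseteq> S\<close> by (simp add: sum.subset_diff add.commute)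
      also have "\<dots> = (\<Sum>i\<in>F. c $ i * exp ((a i - a k) \<bullet> x)) +
          (\<Sum>i\<in>S - F. (c $ i * exp ((a i - a k) \<bullet> x)) * exp (t * ((a i - a k) \<bullet> y)))"
        by (intro arg_cong2[where f = "(+)"] sum.cong) (auto simp: F_def inner_add_right exp_add)
      finally show ?thesis using shifted_Sig_nonneg[of "x + t *\<^sub>R y"] by (simp add: add.assoc)
    qed
  qed simp
  moreover have "Sig a ?cF x = exp (a k \<bullet> x) * (?cF $ k + (\<Sum>i\<in>F. ?cF $ i * exp ((a i - a k) \<bullet> x)))" for x
    by (rule Sig_factor_exp) (auto simp: F_def S_def)
  ultimately show ?thesis
    using c_AGE k_notin_S by (auto simp: C_AGE_def C_NNS_def F_def)
qed

lemma no_recession_direction: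
  assumes y: "\<forall>i\<in>S. (a i - a k) \<bullet> y \<le> 0"
  shows "\<forall>i\<in>S. (a i - a k) \<bullet> y = 0"
proof (rule ccontr)
  define cF where "cF = (\<chi> i. if i \<in> S \<and> (a i - a k) \<bullet> y \<noteq> 0 then 0 else c $ i)"
  assume "\<not> (\<forall>i\<in>S. (a i - a k) \<bullet> y = 0)"
  then obtain j where j: "j \<in> S" "(a j - a k) \<bullet> y \<noteq> 0" by blast
  have "cF \<in> C_SAGE a"
    using truncation_in_C_AGE[OF y] C_AGE_subset_C_SAGE by (auto simp: cF_def)
  moreover have "c - cF \<in> C_SAGE a"
    by (rule nonneg_in_C_SAGE) (auto simp: cF_def less_imp_le c_pos)
  ultimately obtain t where t: "c - cF = t *\<^sub>R c"
    using ray_indecomposableD[OF indecomposable, of "c - cF" cF] by auto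
  have "t * c $ k = 0" using arg_cong[OF t, of "\<lambda>v. v $ k"] k_notin_S by (simp add: cF_def)
  then have "t = 0" using c_k_neg by simp
  then show False using arg_cong[OF t, of "\<lambda>v. v $ j"] j c_pos[of j] by (simp add: cF_def)
qed

definition x0 :: "real^'n" where
  "x0 = (SOME z. \<forall>x. (\<Sum>i\<in>S. c $ i * exp ((a i - a k) \<bullet> z)) \<le> (\<Sum>i\<in>S. c $ i * exp ((a i - a k) \<bullet> x)))"

lemma x0_minimizes: "(\<Sum>i\<in>S. c $ i * exp ((a i - a k) \<bullet> x0)) \<le> (\<Sum>i\<in>S. c $ i * exp ((a i - a k) \<bullet> x))"
proof -
  have "\<exists>z. \<forall>x. (\<Sum>i\<in>S. c $ i * exp ((a i - a k) \<bullet> z)) \<le> (\<Sum>i\<in>S. c $ i * exp ((a i - a k) \<bullet> x))"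
    by (rule exp_sum_attains_min) (use c_pos no_recession_direction in auto)
  from someI_ex[OF this] show ?thesis unfolding x0_def by blast
qed

definition \<nu> :: "'m \<Rightarrow> real" where
  "\<nu> i = c $ i * exp ((a i - a k) \<bullet> x0)"

lemma \<nu>_pos: "i \<in> S \<Longrightarrow> 0 < \<nu> i"
  by (simp add: \<nu>_def c_pos)

lemma \<nu>_balanced: "(\<Sum>i\<in>S. \<nu> i *\<^sub>R (a i - a k)) = 0"
  unfolding \<nu>_def by (rule exp_sum_min_stationary) (rule x0_minimizes)

lemma c_eq_AGE_witness: "c = AGE_witness a k S \<nu> x0"
proof -
  let ?d = "AGE_witness a k S \<nu> x0"
  have d_S: "?d $ i = c $ i" if "i \<in> S" for i
    using that by (simp add: AGE_witness_def \<nu>_def mult.assoc flip: exp_add)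
  \<comment> \<open>minimality at \<open>x0\<close> only gives \<open>c $ k \<ge> ?d $ k\<close>; indecomposability forces equality\<close>
  have "0 \<le> (c - ?d) $ i" for i
  proof (cases "i \<in> S")
    case True
    then show ?thesis using d_S by simp
  next
    case False
    then show ?thesis
      using shifted_Sig_nonneg[of x0] by (cases "i = k") (auto simp: AGE_witness_def \<nu>_def S_def)
  qed
  then have "c - ?d \<in> C_SAGE a" by (rule nonneg_in_C_SAGE)
  moreover have "?d \<in> C_SAGE a"
    using AGE_witness_in_C_AGE[OF k_notin_S _ \<nu>_balanced] \<nu>_pos C_AGE_subset_C_SAGE
    by (meson less_imp_le subsetD)
  ultimately obtain t where t: "c - ?d = t *\<^sub>R c"
    using ray_indecomposableD[OF indecomposable] by fastforce
  obtain j where "j \<in> S" using S_nonempty by blast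
  then have "t = 0" using arg_cong[OF t, of "\<lambda>v. v $ j"] d_S c_pos[of j] by simp
  then show ?thesis using t by simp
qed

lemma balanced_minorant_proportional:
  assumes nonneg: "\<And>i. i \<in> S \<Longrightarrow> 0 \<le> \<mu> i" and le: "\<And>i. i \<in> S \<Longrightarrow> \<mu> i \<le> \<nu> i"
    and balanced: "(\<Sum>i\<in>S. \<mu> i *\<^sub>R (a i - a k)) = 0"
  shows "\<exists>t. \<forall>i\<in>S. \<mu> i = t * \<nu> i"
proof -
  \<comment> \<open>\<open>\<mu>\<close> and \<open>\<nu> - \<mu>\<close> split \<open>c\<close> into two AGE witnesses\<close>
  have "(\<Sum>i\<in>S. (\<nu> i - \<mu> i) *\<^sub>R (a i - a k)) = 0"
    using \<nu>_balanced balanced by (simp add: scaleR_diff_left sum_subtractf)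
  then have "AGE_witness a k S \<mu> x0 \<in> C_SAGE a" "AGE_witness a k S (\<lambda>i. \<nu> i - \<mu> i) x0 \<in> C_SAGE a"
    using AGE_witness_in_C_AGE[OF k_notin_S nonneg balanced] le C_AGE_subset_C_SAGE
      AGE_witness_in_C_AGE[OF k_notin_S, of "\<lambda>i. \<nu> i - \<mu> i"] by force+
  moreover have "AGE_witness a k S \<mu> x0 + AGE_witness a k S (\<lambda>i. \<nu> i - \<mu> i) x0 = c"
    by (subst c_eq_AGE_witness, subst AGE_witness_add[symmetric]) simp
  ultimately obtain t where t: "AGE_witness a k S \<mu> x0 = t *\<^sub>R c"
    using ray_indecomposableD[OF indecomposable] by blast
  have "\<mu> i = t * \<nu> i" if "i \<in> S" for i
  proof -
    have "\<mu> i * exp (- ((a i - a k) \<bullet> x0)) = t * \<nu> i * exp (- ((a i - a k) \<bullet> x0))"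
      using arg_cong[OF t, of "\<lambda>v. v $ i"] arg_cong[OF c_eq_AGE_witness, of "\<lambda>v. v $ i"] that
      by (simp add: AGE_witness_def)
    then show ?thesis by simp
  qed
  then show ?thesis by blast
qed

lemma kernel_multiple_of_\<nu>:
  assumes l: "(\<Sum>i\<in>S. l i *\<^sub>R (a i - a k)) = 0"
  shows "\<exists>r. \<forall>i\<in>S. l i = r * \<nu> i"
proof -
  obtain \<epsilon> where "0 < \<epsilon>" and small: "\<And>i. i \<in> S \<Longrightarrow> \<epsilon> * \<bar>l i\<bar> < \<nu> i"
    using small_multiple_dominated[of S \<nu> l] \<nu>_pos by auto
  define \<mu> where "\<mu> i = 1/2 * \<nu> i + \<epsilon>/2 * l i" for i
  have "0 \<le> \<mu> i \<and> \<mu> i \<le> \<nu> i" if "i \<in> S" for i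
  proof -
    have "\<bar>\<epsilon> * l i\<bar> < \<nu> i" using small[OF that] \<open>0 < \<epsilon>\<close> by (simp add: abs_mult)
    then show ?thesis by (simp add: \<mu>_def abs_less_iff)
  qed
  moreover have "(\<Sum>i\<in>S. \<mu> i *\<^sub>R (a i - a k)) =
      (1/2) *\<^sub>R (\<Sum>i\<in>S. \<nu> i *\<^sub>R (a i - a k)) + (\<epsilon>/2) *\<^sub>R (\<Sum>i\<in>S. l i *\<^sub>R (a i - a k))"
    by (simp add: \<mu>_def scaleR_add_left sum.distrib scaleR_sum_right)
  then have "(\<Sum>i\<in>S. \<mu> i *\<^sub>R (a i - a k)) = 0" using \<nu>_balanced l by simp
  ultimately obtain t where "\<And>i. i \<in> S \<Longrightarrow> \<mu> i = t * \<nu> i"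
    using balanced_minorant_proportional[of \<mu>] by blast
  then have "l i = ((2 * t - 1) / \<epsilon>) * \<nu> i" if "i \<in> S" for i
    using that \<open>0 < \<epsilon>\<close> by (simp add: \<mu>_def field_simps)
  then show ?thesis by blast
qed

lemma support_simplicial_circuit:
  assumes "inj a"
  shows "simplicial_circuit (a ` {i. c $ i \<noteq> 0})"
  unfolding support_eq
  by (rule simplicial_circuit_of_one_dim_kernel[OF inj_on_subset[OF assms] _ k_notin_S S_nonempty \<nu>_pos \<nu>_balanced])
    (simp_all add: kernel_multiple_of_\<nu>)

end

theorem mainTheorem4:
  fixes a :: "'m::finite \<Rightarrow> real^'n" and c :: "real^'m"
  assumes "inj a"
    and "generates_extreme_ray (C_SAGE a) c"
  shows "(\<exists>p. a ` {i. c $ i \<noteq> 0} = {p}) \<or> simplicial_circuit (a ` {i. c $ i \<noteq> 0})"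
proof -
  have "c \<noteq> 0" and ray: "((\<lambda>t. t *\<^sub>R c) ` {0..}) face_of C_SAGE a"
    using assms(2) by (auto simp: generates_extreme_ray_def)
  have indecomposable: "ray_indecomposable (C_SAGE a) c"
    using face_of_ray_imp_ray_indecomposable[OF cone_C_SAGE ray] .
  have "c \<in> C_SAGE a"
    using face_of_imp_subset[OF ray] image_eqI[of c "\<lambda>t. t *\<^sub>R c" 1 "{0..}"] by auto
  then obtain k where c_AGE: "c \<in> C_AGE a k"
    using ray_indecomposable_SAGE_imp_AGE[OF indecomposable _ \<open>c \<noteq> 0\<close>] by blast
  show ?thesis
  proof (cases "c $ k < 0")
    case True
    then interpret negative_extreme_AGE a c k
      using indecomposable c_AGE by unfold_locales
    show ?thesis using support_simplicial_circuit[OF assms(1)] by blast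
  next
    case False
    then have "0 \<le> c $ i" for i
      using c_AGE by (cases "i = k") (auto simp: C_AGE_def)
    then obtain j where "{i. c $ i \<noteq> 0} = {j}"
      using ray_indecomposable_nonneg_imp_singleton_support[OF indecomposable _ \<open>c \<noteq> 0\<close>] by blast
    then show ?thesis by auto
  qed
qed

end
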